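(* Let $n, r, d$ be positive integers with $n\geqslant r+1$ and $d\geqslant2$, and let $\delta=(d-2)/(d-1)$. Then $$\frac{1}{r}\binom{d+r}{d+1}\leqslant m\!\left(K_n^d, r\right)\leqslant\frac{(r+2d-1)^d-\delta^2(r-2)^d}{2\,d!}.$$
   Context: All graphs are finite, simple and undirected. For a nonnegative integer $r$ and a graph $G$, the $r$-neighbor bootstrap percolation process on $G$ starts with a set $A_0\subseteq V(G)$ of initially active vertices, and for $i\geqslant 1$, $A_i=A_{i-1}\cup\{v\in V(G) : |N(v)\cap A_{i-1}|\geqslant r\}$, where $N(v)$ is the set of neighbors of $v$. The set $A_0$ is a percolating set if $\bigcup_{i\geqslant 0}A_i=V(G)$. $m(G,r)$ denotes the minimum size of a percolating set of $G$ in the $r$-neighbor bootstrap percolation process. $K_n$ is the complete graph with vertex set $\{0,1,\ldots,n-1\}$, and $K_n^d$ is the Cartesian product of $d$ copies of $K_n$: its vertex set is $\{0,\ldots,n-1\}^d$ and two vertices are adjacent iff they differ in exactly one coordinate. *)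

theory Defs
  imports Complex_Main
begin

text \<open>A finite simple graph is given by a vertex set V and a symmetric irreflexive
adjacency relation E. Neighbourhood of v: the vertices u in V with E v u.\<close>

definition nbhd :: "'a set \<Rightarrow> ('a \<Rightarrow> 'a \<Rightarrow> bool) \<Rightarrow> 'a \<Rightarrow> 'a set" where
  "nbhd V E v = {u \<in> V. E v u}"

definition bp_step :: "'a set \<Rightarrow> ('a \<Rightarrow> 'a \<Rightarrow> bool) \<Rightarrow> nat \<Rightarrow> 'a set \<Rightarrow> 'a set" where
  "bp_step V E r A = A \<union> {v \<in> V. card (nbhd V E v \<inter> A) \<ge> r}"

definition percolating :: "'a set \<Rightarrow> ('a \<Rightarrow> 'a \<Rightarrow> bool) \<Rightarrow> nat \<Rightarrow> 'a set \<Rightarrow> bool" where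
  "percolating V E r A0 \<longleftrightarrow> A0 \<subseteq> V \<and> (\<Union>i. (bp_step V E r ^^ i) A0) = V"

definition m_perc :: "'a set \<Rightarrow> ('a \<Rightarrow> 'a \<Rightarrow> bool) \<Rightarrow> nat \<Rightarrow> nat" where
  "m_perc V E r = (LEAST k. \<exists>A. percolating V E r A \<and> card A = k)"

text \<open>K_n^d: vertices are words of length d over {0..n-1} (coordinates indexed 0..d-1),
  adjacent iff they differ in exactly one coordinate.\<close>
definition Knd_V :: "nat \<Rightarrow> nat \<Rightarrow> nat list set" where
  "Knd_V n d = {x. length x = d \<and> (\<forall>i<d. x ! i < n)}"

definition Knd_E :: "nat \<Rightarrow> nat list \<Rightarrow> nat list \<Rightarrow> bool" where
  "Knd_E d x y \<longleftrightarrow> card {i. i < d \<and> x ! i \<noteq> y ! i} = 1"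

end

theory Submission
  imports Defs "HOL-Library.Function_Algebras" "HOL-Computational_Algebra.Polynomial"
begin

text \<open>
  Lower bound, by the polynomial method. Put a vertex \<open>x\<close> at the point \<open>a\<close> with
  \<open>a j = x ! j + n j\<close>, and attach to a vector \<open>c\<close> indexed by exponent vectors
  \<open>(k\<^sub>0, \<dots>, k\<^sub>d)\<close> of total degree below \<open>r\<close> the polynomial
  \<open>P\<^sub>x(t) = \<Sum> c\<^sub>k t ^ k\<^sub>0 \<Prod>\<^sub>j (a j (a j - t)) ^ k\<^sub>j\<^sub>+\<^sub>1\<close>.
  If \<open>y\<close> differs from \<open>x\<close> only in coordinate \<open>i\<close>, the factor \<open>a i (a i - t)\<close> is the
  same for \<open>x\<close> and \<open>y\<close> at \<open>t = a\<^sub>x i + a\<^sub>y i\<close>, so \<open>P\<^sub>x\<close> and \<open>P\<^sub>y\<close> agree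
  there, and distinct neighbours of \<open>x\<close> give distinct such points. Hence if every \<open>P\<^sub>a\<close>,
  \<open>a \<in> A\<close>, vanishes at \<open>0, \<dots>, r - 1\<close>, where \<open>A\<close> percolates, then \<open>P\<^sub>x = 0\<close>
  for every vertex that acquires \<open>r\<close> active neighbours, hence for all vertices, and then
  \<open>c = 0\<close> because these polynomials are linearly independent on the grid. So the linear
  map sending \<open>c\<close> to the values \<open>P\<^sub>a(j)\<close> (\<open>a \<in> A\<close>, \<open>j < r\<close>) is injective, and
  the number \<open>(d + r choose d + 1)\<close> of exponent vectors is at most \<open>r |A|\<close>.

  Upper bound. The vertices whose coordinate sum \<open>s\<close> satisfies \<open>s \<le> r\<close> and
  \<open>s \<equiv> r (mod d)\<close> percolate, by induction on \<open>s\<close>. Raising the first coordinate by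
  \<open>j < d\<close> maps pairs of such a vertex and \<open>j\<close> injectively to vectors of coordinate sum
  below \<open>r + d\<close>, so there are at most \<open>(r + 2d - 1 choose d) / d\<close> of them, and an
  elementary estimate gives the stated bound.
\<close>

section \<open>Linear independence and dimension\<close>

lemma card_le_card_if_independent_supported:
  fixes F :: "('q \<Rightarrow> real) set"
  assumes "finite Q" "finite F" and supp: "\<And>f x. f \<in> F \<Longrightarrow> x \<notin> Q \<Longrightarrow> f x = 0"
    and indep: "\<And>u. (\<And>x. (\<Sum>f\<in>F. u f * f x) = 0) \<Longrightarrow> \<forall>f\<in>F. u f = 0"
  shows "card F \<le> card Q"
proof -
  interpret fun_space: vector_space "\<lambda>(c::real) (f::'q \<Rightarrow> real) x. c * f x"
    by unfold_locales (auto simp: algebra_simps)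
  have sum_apply: "(\<Sum>v\<in>S. g v) x = (\<Sum>v\<in>S. g v x)" if "finite S" for S and g :: "_ \<Rightarrow> 'q \<Rightarrow> real" and x
    using that by (induction S rule: finite_induct) auto
  have "fun_space.independent F"
  proof
    assume "fun_space.dependent F"
    then obtain u where u: "\<exists>f\<in>F. u f \<noteq> 0" "(\<Sum>f\<in>F. (\<lambda>x. u f * f x)) = 0"
      unfolding fun_space.dependent_finite[OF \<open>finite F\<close>] by blast
    have "(\<Sum>f\<in>F. u f * f x) = 0" for x
      using fun_cong[OF u(2), of x] by (simp add: sum_apply[OF \<open>finite F\<close>])
    with indep u(1) show False by blast
  qed
  moreover define unit where "unit q = (\<lambda>p. if p = q then 1 else 0 :: real)" for q :: 'q
  have "F \<subseteq> fun_space.span (unit ` Q)"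
  proof
    fix f assume "f \<in> F"
    then have "f = (\<Sum>q\<in>Q. (\<lambda>x. f q * unit q x))"
      using \<open>finite Q\<close> supp by (auto simp: sum_apply unit_def if_distrib cong: if_cong)
    also have "\<dots> \<in> fun_space.span (unit ` Q)"
      by (intro fun_space.span_sum fun_space.span_scale fun_space.span_base) auto
    finally show "f \<in> fun_space.span (unit ` Q)" .
  qed
  ultimately have "card F \<le> card (unit ` Q)"
    using fun_space.independent_span_bound[OF finite_imageI[OF \<open>finite Q\<close>]] by blast
  also have "\<dots> \<le> card Q" using card_image_le[OF \<open>finite Q\<close>] .
  finally show ?thesis .
qed

lemma card_le_card_if_rows_independent:
  fixes w :: "'i \<Rightarrow> 'q \<Rightarrow> real"
  assumes "finite M" "finite Q"
    and indep: "\<And>c. (\<And>q. q \<in> Q \<Longrightarrow> (\<Sum>i\<in>M. c i * w i q) = 0) \<Longrightarrow> \<forall>i\<in>M. c i = 0"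
  shows "card M \<le> card Q"
proof -
  define row where "row i = (\<lambda>q. if q \<in> Q then w i q else 0)" for i
  have inj: "inj_on row M"
  proof
    fix i j assume ij: "i \<in> M" "j \<in> M" "row i = row j"
    define c where "c k = of_bool (k = i) - (of_bool (k = j) :: real)" for k
    have "(\<Sum>k\<in>M. c k * w k q) = w i q - w j q" for q
      using ij(1,2) \<open>finite M\<close> by (simp add: c_def left_diff_distrib sum_subtractf)
    moreover have "w i q = w j q" if "q \<in> Q" for q
      using fun_cong[OF ij(3), of q] that by (simp add: row_def)
    ultimately have "\<forall>k\<in>M. c k = 0" by (intro indep) simp
    then have "c i = 0" using ij(1) by blast
    then show "i = j" by (simp add: c_def)
  qed
  have "card (row ` M) \<le> card Q"
  proof (rule card_le_card_if_independent_supported[OF \<open>finite Q\<close> finite_imageI[OF \<open>finite M\<close>]])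
    show "f x = 0" if "f \<in> row ` M" "x \<notin> Q" for f x
      using that by (auto simp: row_def)
    fix u assume u: "\<And>x. (\<Sum>f\<in>row ` M. u f * f x) = 0"
    have "(\<Sum>i\<in>M. u (row i) * w i q) = 0" if "q \<in> Q" for q
    proof -
      have "(\<Sum>i\<in>M. u (row i) * w i q) = (\<Sum>i\<in>M. u (row i) * row i q)"
        using that by (simp add: row_def)
      also have "\<dots> = (\<Sum>f\<in>row ` M. u f * f q)" using inj by (simp add: sum.reindex)
      finally show ?thesis using u by simp
    qed
    from indep[OF this] show "\<forall>f\<in>row ` M. u f = 0" by blast
  qed
  then show ?thesis using card_image[OF inj] by simp
qed

section \<open>Combinations of powers of \<open>a (a - t)\<close>\<close>

lemma coeff_mult_degree_bounds:
  fixes p q :: "'a::comm_semiring_1 poly"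
  assumes "degree p \<le> i" "degree q \<le> j"
  shows "coeff (p * q) (i + j) = coeff p i * coeff q j"
proof (cases "degree p = i \<and> degree q = j")
  case True
  then show ?thesis using coeff_mult_degree_sum by blast
next
  case False
  then have "coeff p i * coeff q j = 0" using assms by (auto simp: coeff_eq_0)
  moreover have "degree (p * q) < i + j" using False assms degree_mult_le[of p q] by linarith
  ultimately show ?thesis by (simp add: coeff_eq_0)
qed

lemma degree_coeff_linear_power:
  fixes b c :: "'a::comm_semiring_1"
  shows "degree ([:b, c:] ^ k) \<le> k \<and> coeff ([:b, c:] ^ k) k = c ^ k"
proof (induction k)
  case (Suc k)
  have "degree [:b, c:] \<le> 1" by simp
  then show ?case
    using Suc coeff_mult_degree_bounds[of "[:b, c:]" 1 "[:b, c:] ^ k" k] degree_mult_le[of "[:b, c:]" "[:b, c:] ^ k"]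
    by auto
qed simp

text \<open>The coefficient of \<open>t ^ m\<close> in the combination is a polynomial in \<open>-a\<close> whose
  coefficients are the top coefficients of the \<open>q k\<close>, and it has more than \<open>m\<close> roots.\<close>
lemma refl_power_combination_top_coeffs:
  fixes q :: "nat \<Rightarrow> real poly"
  assumes "finite S" "m < card S" "\<forall>k\<le>m. degree (q k) \<le> m - k"
    and "\<forall>a\<in>S. (\<Sum>k\<le>m. [:a * a, - a:] ^ k * q k) = 0"
  shows "\<forall>k\<le>m. coeff (q k) (m - k) = 0"
proof -
  define top where "top = (\<Sum>k\<le>m. monom (coeff (q k) (m - k)) k)"
  have "poly top (- a) = 0" if "a \<in> S" for a
  proof -
    have "coeff ([:a * a, - a:] ^ k * q k) m = (- a) ^ k * coeff (q k) (m - k)" if "k \<le> m" for k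
      using coeff_mult_degree_bounds[of "[:a * a, - a:] ^ k" k "q k" "m - k"] that assms(3)
        degree_coeff_linear_power[of "a * a" "- a" k] by simp
    then have "poly top (- a) = coeff (\<Sum>k\<le>m. [:a * a, - a:] ^ k * q k) m"
      unfolding top_def poly_sum poly_monom coeff_sum by (intro sum.cong) (simp_all add: mult.commute)
    then show ?thesis using assms(4) that by simp
  qed
  moreover have "degree top \<le> m"
    unfolding top_def by (intro degree_sum_le order.trans[OF degree_monom_le]) auto
  ultimately have "top = 0"
    using assms(1,2) poly_eqI_degree[of "uminus ` S" top 0] by (auto simp: card_image)
  moreover have "coeff top k = coeff (q k) (m - k)" if "k \<le> m" for k
    unfolding top_def coeff_sum coeff_monom using that by (simp add: sum.delta)
  ultimately show ?thesis by simp
qed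

lemma refl_power_combination_eq_0:
  fixes q :: "nat \<Rightarrow> real poly"
  assumes "finite S" "m < card S" "\<forall>k\<le>m. degree (q k) \<le> m - k"
    and "\<forall>a\<in>S. (\<Sum>k\<le>m. [:a * a, - a:] ^ k * q k) = 0"
  shows "\<forall>k\<le>m. q k = 0"
  using assms(2-)
proof (induction m arbitrary: q)
  case 0
  then show ?case by (auto simp: card_gt_0_iff)
next
  case (Suc m)
  have top: "\<forall>k\<le>Suc m. coeff (q k) (Suc m - k) = 0"
    using refl_power_combination_top_coeffs[OF assms(1) Suc.prems] .
  have "degree (q (Suc m)) = 0" "coeff (q (Suc m)) 0 = 0"
    using top Suc.prems(2) by auto
  then have "q (Suc m) = 0"
    using leading_coeff_0_iff[of "q (Suc m)"] by simp
  moreover have "\<forall>k\<le>m. degree (q k) \<le> m - k"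
  proof (intro allI impI degree_le)
    fix k i assume "k \<le> m" "m - k < i"
    moreover have "degree (q k) \<le> Suc m - k" using Suc.prems(2) \<open>k \<le> m\<close> by simp
    ultimately consider "i = Suc m - k" | "degree (q k) < i" by linarith
    then show "coeff (q k) i = 0"
      using top \<open>k \<le> m\<close> by cases (auto simp: coeff_eq_0)
  qed
  moreover have "\<forall>a\<in>S. (\<Sum>k\<le>m. [:a * a, - a:] ^ k * q k) = 0"
    using Suc.prems(3) \<open>q (Suc m) = 0\<close> by simp
  ultimately have "\<forall>k\<le>m. q k = 0"
    using Suc.IH Suc.prems(1) by simp
  with \<open>q (Suc m) = 0\<close> show ?case by (auto simp: le_Suc_eq)
qed

lemma card_lists_sum_le: "card {l :: nat list. length l = k \<and> sum_list l \<le> N} = (N + k) choose k"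
proof -
  let ?L = "{l :: nat list. length l = k \<and> sum_list l \<le> N}"
  let ?L' = "{l :: nat list. length l = Suc k \<and> sum_list l = N}"
  have split_last: "l = butlast l @ [last l] \<and> sum_list l = sum_list (butlast l) + last l" if "l \<in> ?L'" for l
  proof -
    have "l = butlast l @ [last l]" using that by (intro append_butlast_last_id[symmetric]) auto
    then show ?thesis by (metis sum_list_append sum_list_simps add_0_right)
  qed
  have "bij_betw (\<lambda>l. l @ [N - sum_list l]) ?L ?L'"
  proof (rule bij_betw_byWitness[where f' = butlast])
    show "\<forall>l\<in>?L'. butlast l @ [N - sum_list (butlast l)] = l"
    proof
      fix l assume "l \<in> ?L'"
      then have "l \<noteq> []" "N - sum_list (butlast l) = last l"
        using split_last[of l] by auto
      then show "butlast l @ [N - sum_list (butlast l)] = l" by simp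
    qed
    show "butlast ` ?L' \<subseteq> ?L"
    proof (rule image_subsetI)
      fix l assume "l \<in> ?L'"
      with split_last[OF this] show "butlast l \<in> ?L" by simp
    qed
  qed auto
  then have "card ?L = (N + Suc k - 1) choose N"
    using card_length_sum_list[of "Suc k" N] by (simp add: bij_betw_same_card)
  then show ?thesis using binomial_symmetric[of N "N + k"] by simp
qed

definition monomial_exps :: "nat \<Rightarrow> nat \<Rightarrow> nat list set" where
  "monomial_exps d m = {e. length e = Suc d \<and> sum_list e \<le> m}"

text \<open>\<open>refl_monomial (k\<^sub>0 # k\<^sub>1 # \<dots> # k\<^sub>d) a\<close> is the polynomial
  \<open>t ^ k\<^sub>0 * (\<Prod>j<d. (a j * (a j - t)) ^ k\<^sub>j\<^sub>+\<^sub>1)\<close> in \<open>t\<close>; exponent lists are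
  never empty, so the value at \<open>[]\<close> is irrelevant.\<close>
fun refl_monomial :: "nat list \<Rightarrow> (nat \<Rightarrow> real) \<Rightarrow> real poly" where
  "refl_monomial [] a = 1"
| "refl_monomial (k0 # ks) a = monom 1 k0 * (\<Prod>j<length ks. [:a j * a j, - a j:] ^ (ks ! j))"

lemma card_monomial_exps: "card (monomial_exps d m) = (m + Suc d) choose Suc d"
  unfolding monomial_exps_def by (rule card_lists_sum_le)

lemma finite_monomial_exps: "finite (monomial_exps d m)"
  by (rule card_ge_0_finite) (simp add: card_monomial_exps)

lemma Cons_Cons_in_monomial_exps:
  "k0 # k # ks \<in> monomial_exps (Suc d) m \<longleftrightarrow> k \<le> m \<and> k0 # ks \<in> monomial_exps d (m - k)"
  by (auto simp: monomial_exps_def)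

lemma monomial_exps_Suc_cases:
  assumes "e \<in> monomial_exps (Suc d) m"
  obtains k0 k ks where "e = k0 # k # ks"
  using assms unfolding monomial_exps_def by (cases e; cases "tl e") auto

lemma sum_monomial_exps_Suc:
  "(\<Sum>e\<in>monomial_exps (Suc d) m. f e) = (\<Sum>k\<le>m. \<Sum>e\<in>monomial_exps d (m - k). f (hd e # k # tl e))"
proof -
  have nonempty: "e = hd e # tl e" if "e \<in> monomial_exps d m'" for e m'
    using that by (cases e) (auto simp: monomial_exps_def)
  have "(\<Sum>e\<in>monomial_exps (Suc d) m. f e)
      = (\<Sum>(k, e)\<in>(SIGMA k:{..m}. monomial_exps d (m - k)). f (hd e # k # tl e))"
  proof (rule sum.reindex_bij_witness[where i = "\<lambda>(k, e). hd e # k # tl e"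
        and j = "\<lambda>e. (hd (tl e), hd e # tl (tl e))"])
    fix e assume e: "e \<in> monomial_exps (Suc d) m"
    then obtain k0 k ks where "e = k0 # k # ks" by (rule monomial_exps_Suc_cases)
    with e show "(\<lambda>(k, e). hd e # k # tl e) (hd (tl e), hd e # tl (tl e)) = e"
      and "(hd (tl e), hd e # tl (tl e)) \<in> (SIGMA k:{..m}. monomial_exps d (m - k))"
      and "(\<lambda>(k, e). f (hd e # k # tl e)) (hd (tl e), hd e # tl (tl e)) = f e"
      by (auto simp: Cons_Cons_in_monomial_exps)
  next
    fix ke assume "ke \<in> (SIGMA k:{..m}. monomial_exps d (m - k))"
    then show "(\<lambda>e. (hd (tl e), hd e # tl (tl e))) ((\<lambda>(k, e). hd e # k # tl e) ke) = ke"
      and "(\<lambda>(k, e). hd e # k # tl e) ke \<in> monomial_exps (Suc d) m"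
      using nonempty by (auto simp: Cons_Cons_in_monomial_exps)
  qed
  then show ?thesis by (simp add: sum.Sigma finite_monomial_exps split_def)
qed

lemma degree_refl_monomial: "degree (refl_monomial e a) \<le> sum_list e"
proof (cases e)
  case (Cons k0 ks)
  have "degree (\<Prod>j<length ks. [:a j * a j, - a j:] ^ (ks ! j)) \<le> (\<Sum>j<length ks. ks ! j)"
    by (intro degree_prod_sum_le[THEN order.trans] sum_mono)
      (use degree_coeff_linear_power in auto)
  also have "\<dots> = sum_list ks"
    by (simp add: sum_list_sum_nth atLeast0LessThan)
  finally show ?thesis
    using Cons order.trans[OF degree_mult_le add_mono[OF degree_monom_le]] by simp
qed simp

lemma refl_monomial_Cons_Cons:
  "refl_monomial (k0 # k # ks) a = [:a 0 * a 0, - a 0:] ^ k * refl_monomial (k0 # ks) (\<lambda>j. a (Suc j))"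
  by (simp add: prod.lessThan_Suc_shift del: prod.lessThan_Suc)

lemma refl_monomial_cong:
  "(\<And>j. j < length e - 1 \<Longrightarrow> a j = b j) \<Longrightarrow> refl_monomial e a = refl_monomial e b"
  by (cases e) (auto intro!: prod.cong)

text \<open>Each factor \<open>a j (a j - t)\<close> is invariant under the reflection \<open>a j \<mapsto> t - a j\<close>.\<close>
lemma poly_refl_monomial_update:
  "poly (refl_monomial e (a(i := b))) (a i + b) = poly (refl_monomial e a) (a i + b)"
proof -
  have "poly [:(a(i := b)) j * (a(i := b)) j, - (a(i := b)) j:] (a i + b) = poly [:a j * a j, - a j:] (a i + b)"
    for j by (cases "j = i") (simp_all add: algebra_simps)
  then show ?thesis by (cases e) (simp_all add: poly_prod)
qed

lemma degree_refl_combination: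
  "degree (\<Sum>e\<in>monomial_exps d m. smult (c e) (refl_monomial e a)) \<le> m"
proof (intro degree_sum_le[OF finite_monomial_exps])
  fix e assume "e \<in> monomial_exps d m"
  then have "sum_list e \<le> m" by (simp add: monomial_exps_def)
  then show "degree (smult (c e) (refl_monomial e a)) \<le> m"
    using degree_smult_le[of "c e" "refl_monomial e a"] degree_refl_monomial[of e a] by linarith
qed

lemma refl_combination_Suc:
  "(\<Sum>e\<in>monomial_exps (Suc d) m. smult (c e) (refl_monomial e a))
    = (\<Sum>k\<le>m. [:a 0 * a 0, - a 0:] ^ k *
        (\<Sum>e\<in>monomial_exps d (m - k). smult (c (hd e # k # tl e)) (refl_monomial e (\<lambda>j. a (Suc j)))))"
proof -
  have "refl_monomial (hd e # k # tl e) a = [:a 0 * a 0, - a 0:] ^ k * refl_monomial e (\<lambda>j. a (Suc j))"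
    if "e \<in> monomial_exps d m'" for e k m'
    using that refl_monomial_Cons_Cons[of "hd e" k "tl e" a]
    by (cases e) (simp_all add: monomial_exps_def del: refl_monomial.simps)
  then show ?thesis
    unfolding sum_monomial_exps_Suc sum_distrib_left
    by (intro sum.cong refl) (simp add: mult_smult_right del: refl_monomial.simps)
qed

lemma refl_combination_Suc_slices_eq_0:
  assumes "finite S\<^sub>0" "m < card S\<^sub>0" "k \<le> m"
    and "\<And>a\<^sub>0. a\<^sub>0 \<in> S\<^sub>0 \<Longrightarrow>
      (\<Sum>e\<in>monomial_exps (Suc d) m. smult (c e) (refl_monomial e (case_nat a\<^sub>0 b))) = 0"
  shows "(\<Sum>e\<in>monomial_exps d (m - k). smult (c (hd e # k # tl e)) (refl_monomial e b)) = 0"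
proof -
  define q where "q k = (\<Sum>e\<in>monomial_exps d (m - k). smult (c (hd e # k # tl e)) (refl_monomial e b))"
    for k
  have "\<forall>a\<^sub>0\<in>S\<^sub>0. (\<Sum>k\<le>m. [:a\<^sub>0 * a\<^sub>0, - a\<^sub>0:] ^ k * q k) = 0"
    using assms(4) by (simp add: refl_combination_Suc q_def del: refl_monomial.simps)
  moreover have "\<forall>k\<le>m. degree (q k) \<le> m - k"
    unfolding q_def by (intro allI impI degree_refl_combination)
  ultimately have "\<forall>k\<le>m. q k = 0"
    using assms(1,2) by (intro refl_power_combination_eq_0[of S\<^sub>0]) auto
  with assms(3) show ?thesis by (simp add: q_def)
qed

lemma refl_monomials_independent:
  assumes "\<forall>j<d. finite (S j) \<and> m < card (S j)"
    and "\<And>a. \<forall>j<d. a j \<in> S j \<Longrightarrow> (\<Sum>e\<in>monomial_exps d m. smult (c e) (refl_monomial e a)) = 0"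
  shows "\<forall>e\<in>monomial_exps d m. c e = 0"
  using assms
proof (induction d arbitrary: S c m)
  case 0
  have exps: "monomial_exps 0 m = (\<lambda>k. [k]) ` {..m}"
    by (auto simp: monomial_exps_def length_Suc_conv)
  have "(\<Sum>k\<le>m. monom (c [k]) k) = (\<Sum>e\<in>monomial_exps 0 m. smult (c e) (refl_monomial e a))" for a
    unfolding exps by (subst sum.reindex) (auto simp: inj_on_def smult_monom)
  then have "(\<Sum>k\<le>m. monom (c [k]) k) = 0" using "0.prems"(2) by simp
  moreover have "c [k] = coeff (\<Sum>k\<le>m. monom (c [k]) k) k" if "k \<le> m" for k
    using that by (simp add: coeff_sum coeff_monom)
  ultimately have "c [k] = 0" if "k \<le> m" for k
    using that by simp
  then show ?case by (auto simp: exps)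
next
  case (Suc d)
  have slices: "\<forall>e\<in>monomial_exps d (m - k). c (hd e # k # tl e) = 0" if "k \<le> m" for k
  proof (rule Suc.IH[where S = "\<lambda>j. S (Suc j)"])
    show "\<forall>j<d. finite (S (Suc j)) \<and> m - k < card (S (Suc j))"
      using Suc.prems(1) by (auto intro: le_less_trans[OF diff_le_self])
  next
    fix b assume "\<forall>j<d. b j \<in> S (Suc j)"
    then have "(\<Sum>e\<in>monomial_exps (Suc d) m. smult (c e) (refl_monomial e (case_nat a\<^sub>0 b))) = 0"
      if "a\<^sub>0 \<in> S 0" for a\<^sub>0
      using that by (intro Suc.prems(2)) (auto split: nat.split)
    then show "(\<Sum>e\<in>monomial_exps d (m - k). smult (c (hd e # k # tl e)) (refl_monomial e b)) = 0"
      using Suc.prems(1) \<open>k \<le> m\<close> by (intro refl_combination_Suc_slices_eq_0[of "S 0"]) auto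
  qed
  show ?case
  proof
    fix e assume e: "e \<in> monomial_exps (Suc d) m"
    then obtain k0 k ks where e_eq: "e = k0 # k # ks" by (rule monomial_exps_Suc_cases)
    with e have "k \<le> m" "k0 # ks \<in> monomial_exps d (m - k)"
      by (simp_all add: Cons_Cons_in_monomial_exps)
    then show "c e = 0" using slices e_eq by fastforce
  qed
qed

section \<open>Bootstrap percolation\<close>

definition bp_closure :: "'a set \<Rightarrow> ('a \<Rightarrow> 'a \<Rightarrow> bool) \<Rightarrow> nat \<Rightarrow> 'a set \<Rightarrow> 'a set" where
  "bp_closure V E r A = (\<Union>i. (bp_step V E r ^^ i) A)"

lemma percolating_iff_bp_closure: "percolating V E r A \<longleftrightarrow> A \<subseteq> V \<and> bp_closure V E r A = V"
  unfolding percolating_def bp_closure_def ..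

lemma subset_bp_closure: "A \<subseteq> bp_closure V E r A"
  unfolding bp_closure_def using UN_upper[of 0 UNIV "\<lambda>i. (bp_step V E r ^^ i) A"] by simp

lemma bp_step_iterate_Suc:
  "(bp_step V E r ^^ Suc i) A
    = (bp_step V E r ^^ i) A \<union> {v \<in> V. r \<le> card (nbhd V E v \<inter> (bp_step V E r ^^ i) A)}"
  using bp_step_def[of V E r "(bp_step V E r ^^ i) A"] by simp

lemma bp_step_iterates_mono: "i \<le> j \<Longrightarrow> (bp_step V E r ^^ i) A \<subseteq> (bp_step V E r ^^ j) A"
  by (rule lift_Suc_mono_le[of "\<lambda>i. (bp_step V E r ^^ i) A"]) (auto simp: bp_step_def)

lemma finite_nbhd_Int: "finite V \<Longrightarrow> finite (nbhd V E x \<inter> Z)"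
  unfolding nbhd_def by auto

lemma bp_closure_activate:
  assumes "finite V" "x \<in> V" "r \<le> card (nbhd V E x \<inter> bp_closure V E r A)"
  shows "x \<in> bp_closure V E r A"
proof -
  let ?iter = "\<lambda>i. (bp_step V E r ^^ i) A"
  let ?N = "nbhd V E x \<inter> bp_closure V E r A"
  have "\<forall>y\<in>?N. \<exists>i. y \<in> ?iter i" unfolding bp_closure_def by blast
  from bchoice[OF this] obtain idx where idx: "\<forall>y\<in>?N. y \<in> ?iter (idx y)" ..
  have "?N \<subseteq> nbhd V E x \<inter> ?iter (Max (idx ` ?N))"
  proof
    fix y assume y: "y \<in> ?N"
    then have "idx y \<le> Max (idx ` ?N)"
      using Max_ge[OF finite_imageI[OF finite_nbhd_Int[OF assms(1)]] imageI[OF y]] by simp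
    then have "?iter (idx y) \<subseteq> ?iter (Max (idx ` ?N))" by (rule bp_step_iterates_mono)
    then show "y \<in> nbhd V E x \<inter> ?iter (Max (idx ` ?N))" using idx y by blast
  qed
  from card_mono[OF finite_nbhd_Int[OF assms(1)] this]
  have "r \<le> card (nbhd V E x \<inter> ?iter (Max (idx ` ?N)))" using assms(3) by linarith
  then have "x \<in> ?iter (Suc (Max (idx ` ?N)))" using assms(2) unfolding bp_step_iterate_Suc by blast
  then show ?thesis unfolding bp_closure_def by blast
qed

lemma bp_closure_least:
  assumes "finite V" "A \<subseteq> Z"
    and closed: "\<And>x. x \<in> V \<Longrightarrow> r \<le> card (nbhd V E x \<inter> Z) \<Longrightarrow> x \<in> Z"
  shows "bp_closure V E r A \<subseteq> Z"
proof -
  have "(bp_step V E r ^^ i) A \<subseteq> Z" for i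
  proof (induction i)
    case (Suc i)
    have "r \<le> card (nbhd V E x \<inter> Z)" if "r \<le> card (nbhd V E x \<inter> (bp_step V E r ^^ i) A)" for x
    proof -
      have "nbhd V E x \<inter> (bp_step V E r ^^ i) A \<subseteq> nbhd V E x \<inter> Z" using Suc.IH by blast
      from card_mono[OF finite_nbhd_Int[OF assms(1)] this] that show ?thesis by linarith
    qed
    then show ?case using Suc.IH closed unfolding bp_step_iterate_Suc by blast
  qed (use assms(2) in simp)
  then show ?thesis unfolding bp_closure_def by blast
qed

lemma percolating_self: "percolating V E r V"
proof -
  have "(bp_step V E r ^^ i) V = V" for i
    by (induction i) (auto simp: bp_step_def)
  then show ?thesis unfolding percolating_def by simp
qed

lemma m_perc_le: "percolating V E r A \<Longrightarrow> m_perc V E r \<le> card A"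
  unfolding m_perc_def by (rule Least_le) blast

lemma m_perc_attained: "\<exists>A. percolating V E r A \<and> card A = m_perc V E r"
  unfolding m_perc_def by (rule LeastI[of _ "card V"]) (use percolating_self in blast)

lemma percolating_propagates_poly_eq_0:
  fixes P :: "'a \<Rightarrow> real poly" and \<tau> :: "'a \<Rightarrow> 'a \<Rightarrow> real"
  assumes perc: "percolating V E r A" and "finite V"
    and deg: "\<And>x. x \<in> V \<Longrightarrow> degree (P x) < r"
    and agree: "\<And>x y. x \<in> V \<Longrightarrow> y \<in> nbhd V E x \<Longrightarrow> poly (P x) (\<tau> x y) = poly (P y) (\<tau> x y)"
    and inj: "\<And>x. x \<in> V \<Longrightarrow> inj_on (\<tau> x) (nbhd V E x)"
    and seed: "\<And>a. a \<in> A \<Longrightarrow> P a = 0"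
    and "x \<in> V"
  shows "P x = 0"
proof -
  let ?Z = "{x \<in> V. P x = 0}"
  have "A \<subseteq> V" "bp_closure V E r A = V" using perc by (simp_all add: percolating_iff_bp_closure)
  have "bp_closure V E r A \<subseteq> ?Z"
  proof (rule bp_closure_least[OF \<open>finite V\<close>])
    show "A \<subseteq> ?Z" using \<open>A \<subseteq> V\<close> seed by blast
  next
    fix x assume x: "x \<in> V" and active: "r \<le> card (nbhd V E x \<inter> ?Z)"
    let ?R = "\<tau> x ` (nbhd V E x \<inter> ?Z)"
    have "card ?R = card (nbhd V E x \<inter> ?Z)"
      using inj[OF x] by (intro card_image) (rule inj_on_subset, auto)
    then have "degree (P x) < card ?R" using deg[OF x] active by linarith
    moreover have "poly (P x) t = poly 0 t" if "t \<in> ?R" for t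
      using that agree[OF x] by (auto simp: nbhd_def)
    ultimately have "P x = 0" by (intro poly_eqI_degree[of ?R]) auto
    with x show "x \<in> ?Z" by simp
  qed
  with \<open>bp_closure V E r A = V\<close> \<open>x \<in> V\<close> show ?thesis by blast
qed

section \<open>The Hamming graph\<close>

lemma finite_Knd_V: "finite (Knd_V n d)"
proof (rule finite_subset)
  show "Knd_V n d \<subseteq> {xs. set xs \<subseteq> {..<n} \<and> length xs = d}"
    unfolding Knd_V_def by (auto simp: in_set_conv_nth)
qed (rule finite_lists_length_eq, simp)

lemma nth_list_update_if: "j < length xs \<Longrightarrow> xs[i := v] ! j = (if i = j then v else xs ! j)"
  by (cases "i = j") auto

lemma update_in_Knd_V: "x \<in> Knd_V n d \<Longrightarrow> v < n \<Longrightarrow> x[i := v] \<in> Knd_V n d"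
  unfolding Knd_V_def by (auto simp: nth_list_update_if)

lemma nbhd_Knd:
  assumes "x \<in> Knd_V n d"
  shows "nbhd (Knd_V n d) (Knd_E d) x = {x[i := v] | i v. i < d \<and> v < n \<and> v \<noteq> x ! i}"
proof (intro equalityI subsetI)
  fix y assume "y \<in> nbhd (Knd_V n d) (Knd_E d) x"
  then have y: "y \<in> Knd_V n d" "card {j. j < d \<and> x ! j \<noteq> y ! j} = 1"
    unfolding nbhd_def Knd_E_def by auto
  from card_1_singletonE[OF y(2)] obtain i where i: "{j. j < d \<and> x ! j \<noteq> y ! j} = {i}" .
  have "i \<in> {j. j < d \<and> x ! j \<noteq> y ! j}" using i by simp
  moreover have "y ! j = x ! j" if "j < d" "j \<noteq> i" for j
  proof (rule ccontr)
    assume "y ! j \<noteq> x ! j"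
    then have "j \<in> {j. j < d \<and> x ! j \<noteq> y ! j}" using that(1) by simp
    then show False using i that(2) by simp
  qed
  ultimately have i: "i < d" "y ! i \<noteq> x ! i" "\<And>j. j < d \<Longrightarrow> j \<noteq> i \<Longrightarrow> y ! j = x ! j"
    by auto
  have len: "length x = d" "length y = d" using assms y(1) by (simp_all add: Knd_V_def)
  have "y = x[i := y ! i]"
  proof (rule nth_equalityI)
    fix j assume "j < length y"
    then show "y ! j = x[i := y ! i] ! j" using i len by (cases "j = i") simp_all
  qed (simp add: len)
  moreover have "y ! i < n" using i(1) y(1) by (simp add: Knd_V_def)
  ultimately show "y \<in> {x[i := v] | i v. i < d \<and> v < n \<and> v \<noteq> x ! i}" using i by blast
next
  fix y assume "y \<in> {x[i := v] | i v. i < d \<and> v < n \<and> v \<noteq> x ! i}"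
  then obtain i v where iv: "y = x[i := v]" "i < d" "v < n" "v \<noteq> x ! i" by blast
  have "y ! j = (if i = j then v else x ! j)" if "j < d" for j
    using assms iv(1) that by (simp add: Knd_V_def nth_list_update_if)
  then have "{j. j < d \<and> x ! j \<noteq> y ! j} = {i}"
    using iv(2,4) by (auto split: if_splits)
  then show "y \<in> nbhd (Knd_V n d) (Knd_E d) x"
    using update_in_Knd_V[OF assms iv(3)] iv(1) unfolding nbhd_def Knd_E_def by simp
qed

lemma update_in_nbhd_Knd:
  "x \<in> Knd_V n d \<Longrightarrow> i < d \<Longrightarrow> v < n \<Longrightarrow> v \<noteq> x ! i \<Longrightarrow> x[i := v] \<in> nbhd (Knd_V n d) (Knd_E d) x"
  by (subst nbhd_Knd) blast+

lemma card_coordinate_updates: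
  assumes "length x = d" "\<And>i. i < d \<Longrightarrow> finite (W i)" "\<And>i. i < d \<Longrightarrow> x ! i \<notin> W i"
  shows "card (\<Union>i<d. (\<lambda>v. x[i := v]) ` W i) = (\<Sum>i<d. card (W i))"
proof -
  have inj: "inj_on (\<lambda>v. x[i := v]) (W i)" if "i < d" for i
  proof
    fix v w assume "x[i := v] = x[i := w]"
    then have "x[i := v] ! i = x[i := w] ! i" by simp
    then show "v = w" using assms(1) that by simp
  qed
  have "(\<lambda>v. x[i := v]) ` W i \<inter> (\<lambda>v. x[j := v]) ` W j = {}" if "i < d" "j < d" "i \<noteq> j" for i j
  proof -
    have "v = x ! i" if "x[i := v] = x[j := w]" for v w
    proof -
      from that have "x[i := v] ! i = x[j := w] ! i" by simp
      then show ?thesis using assms(1) \<open>i < d\<close> \<open>i \<noteq> j\<close> by simp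
    qed
    then show ?thesis using assms(3)[OF \<open>i < d\<close>] by blast
  qed
  then have "card (\<Union>i<d. (\<lambda>v. x[i := v]) ` W i) = (\<Sum>i<d. card ((\<lambda>v. x[i := v]) ` W i))"
    using assms(2) by (intro card_UN_disjoint) auto
  also have "\<dots> = (\<Sum>i<d. card (W i))"
    using inj by (intro sum.cong refl card_image) simp
  finally show ?thesis .
qed

section \<open>The lower bound\<close>

text \<open>The offset \<open>n j\<close> keeps the edge points of different coordinates apart.\<close>
definition vertex_point :: "nat \<Rightarrow> nat list \<Rightarrow> nat \<Rightarrow> real" where
  "vertex_point n x j = real (x ! j + n * j)"

definition edge_point :: "nat \<Rightarrow> nat \<Rightarrow> nat list \<Rightarrow> nat list \<Rightarrow> real" where
  "edge_point n d x y = (\<Sum>i<d. if x ! i = y ! i then 0 else real (x ! i + y ! i + 2 * n * i))"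

lemma vertex_point_update:
  "i < length x \<Longrightarrow> vertex_point n (x[i := v]) = (vertex_point n x)(i := real (v + n * i))"
  by (auto simp: vertex_point_def nth_list_update_if)

lemma edge_point_update:
  assumes "length x = d" "i < d" "v \<noteq> x ! i"
  shows "edge_point n d x (x[i := v]) = vertex_point n x i + real (v + n * i)"
proof -
  have "edge_point n d x (x[i := v]) = (\<Sum>j<d. if j = i then real (x ! i + v + 2 * n * i) else 0)"
    unfolding edge_point_def using assms by (intro sum.cong refl) (auto simp: nth_list_update_if)
  then show ?thesis using assms(2) by (simp add: vertex_point_def algebra_simps)
qed

lemma inj_on_edge_point:
  assumes "x \<in> Knd_V n d"
  shows "inj_on (edge_point n d x) (nbhd (Knd_V n d) (Knd_E d) x)"
proof (rule inj_onI)
  fix y y' assume "y \<in> nbhd (Knd_V n d) (Knd_E d) x" "y' \<in> nbhd (Knd_V n d) (Knd_E d) x"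
    and eq: "edge_point n d x y = edge_point n d x y'"
  then obtain i v i' v' where y: "y = x[i := v]" "i < d" "v < n" "v \<noteq> x ! i"
    and y': "y' = x[i' := v']" "i' < d" "v' < n" "v' \<noteq> x ! i'"
    using nbhd_Knd[OF assms] by blast
  have len: "length x = d" and "x ! i < n" "x ! i' < n"
    using assms y(2) y'(2) by (auto simp: Knd_V_def)
  then have lt: "x ! i + v < 2 * n" "x ! i' + v' < 2 * n" using y(3) y'(3) by linarith+
  have "real (x ! i + v + 2 * n * i) = real (x ! i' + v' + 2 * n * i')"
    using eq edge_point_update[OF len y(2,4), of n] edge_point_update[OF len y'(2,4), of n] y(1) y'(1)
    by (simp add: vertex_point_def algebra_simps)
  then have "x ! i + v + 2 * n * i = x ! i' + v' + 2 * n * i'"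
    by (simp only: of_nat_eq_iff)
  then have "(x ! i + v + 2 * n * i) div (2 * n) = (x ! i' + v' + 2 * n * i') div (2 * n)"
    and "(x ! i + v + 2 * n * i) mod (2 * n) = (x ! i' + v' + 2 * n * i') mod (2 * n)" by simp_all
  then have "i = i'" "x ! i + v = x ! i' + v'" using lt by simp_all
  then show "y = y'" using y(1) y'(1) by simp
qed

definition vertex_poly :: "nat \<Rightarrow> nat \<Rightarrow> nat \<Rightarrow> (nat list \<Rightarrow> real) \<Rightarrow> nat list \<Rightarrow> real poly" where
  "vertex_poly n d m c x = (\<Sum>e\<in>monomial_exps d m. smult (c e) (refl_monomial e (vertex_point n x)))"

lemma degree_vertex_poly: "degree (vertex_poly n d m c x) \<le> m"
  unfolding vertex_poly_def by (rule degree_refl_combination)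

lemma poly_vertex_poly_edge_point:
  assumes "x \<in> Knd_V n d" "y \<in> nbhd (Knd_V n d) (Knd_E d) x"
  shows "poly (vertex_poly n d m c x) (edge_point n d x y) = poly (vertex_poly n d m c y) (edge_point n d x y)"
proof -
  obtain i v where y: "y = x[i := v]" "i < d" "v \<noteq> x ! i" using nbhd_Knd[OF assms(1)] assms(2) by blast
  have len: "length x = d" using assms(1) by (simp add: Knd_V_def)
  show ?thesis
    unfolding vertex_poly_def y(1) edge_point_update[OF len y(2,3)] vertex_point_update[OF y(2)[folded len]]
    by (simp add: poly_sum poly_refl_monomial_update)
qed

lemma vertex_polys_eq_0_imp_coeffs_eq_0:
  assumes "m < n" "\<And>x. x \<in> Knd_V n d \<Longrightarrow> vertex_poly n d m c x = 0"
  shows "\<forall>e\<in>monomial_exps d m. c e = 0"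
proof (rule refl_monomials_independent[where S = "\<lambda>j. (\<lambda>v. real (v + n * j)) ` {..<n}"])
  show "\<forall>j<d. finite ((\<lambda>v. real (v + n * j)) ` {..<n}) \<and> m < card ((\<lambda>v. real (v + n * j)) ` {..<n})"
    using assms(1) by (auto simp: card_image inj_on_def)
next
  fix a assume "\<forall>j<d. a j \<in> (\<lambda>v. real (v + n * j)) ` {..<n}"
  then have "\<forall>j\<in>{..<d}. \<exists>v. v < n \<and> a j = real (v + n * j)" by blast
  from bchoice[OF this] obtain f where f: "\<forall>j\<in>{..<d}. f j < n \<and> a j = real (f j + n * j)" ..
  define x where "x = map f [0..<d]"
  have "(\<Sum>e\<in>monomial_exps d m. smult (c e) (refl_monomial e a)) = vertex_poly n d m c x"
    unfolding vertex_poly_def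
  proof (intro sum.cong refl arg_cong[where f = "smult _"] refl_monomial_cong)
    fix e j assume "e \<in> monomial_exps d m" "j < length e - 1"
    then have "j < d" by (simp add: monomial_exps_def)
    then show "a j = vertex_point n x j" using f by (simp add: x_def vertex_point_def)
  qed
  also have "\<dots> = 0" using f by (intro assms(2)) (simp add: x_def Knd_V_def)
  finally show "(\<Sum>e\<in>monomial_exps d m. smult (c e) (refl_monomial e a)) = 0" .
qed

lemma card_monomial_exps_le_percolating:
  assumes "0 < r" "r < n" and perc: "percolating (Knd_V n d) (Knd_E d) r A"
  shows "card (monomial_exps d (r - 1)) \<le> r * card A"
proof -
  let ?V = "Knd_V n d" and ?M = "monomial_exps d (r - 1)"
  have "A \<subseteq> ?V" using perc by (simp add: percolating_def)
  then have "finite A" using finite_Knd_V by (rule finite_subset)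
  have "card ?M \<le> card (A \<times> {..<r})"
  proof (rule card_le_card_if_rows_independent[OF finite_monomial_exps,
        where w = "\<lambda>e (a, j). poly (refl_monomial e (vertex_point n a)) (real j)"])
    show "finite (A \<times> {..<r})" using \<open>finite A\<close> by simp
  next
    fix c assume vanish: "\<And>q. q \<in> A \<times> {..<r} \<Longrightarrow>
      (\<Sum>e\<in>?M. c e * (case q of (a, j) \<Rightarrow> poly (refl_monomial e (vertex_point n a)) (real j))) = 0"
    have deg: "degree (vertex_poly n d (r - 1) c x) < r" for x
      using degree_vertex_poly[of n d "r - 1" c x] assms(1) by linarith
    have seed: "vertex_poly n d (r - 1) c a = 0" if "a \<in> A" for a
    proof (rule poly_eqI_degree[of "real ` {..<r}"])
      show "poly (vertex_poly n d (r - 1) c a) t = poly 0 t" if "t \<in> real ` {..<r}" for t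
        using that vanish \<open>a \<in> A\<close> by (auto simp: vertex_poly_def poly_sum)
      show "degree (vertex_poly n d (r - 1) c a) < card (real ` {..<r})" "degree 0 < card (real ` {..<r})"
        using deg assms(1) by (simp_all add: card_image)
    qed
    have "vertex_poly n d (r - 1) c x = 0" if "x \<in> ?V" for x
      by (rule percolating_propagates_poly_eq_0[OF perc finite_Knd_V deg
            poly_vertex_poly_edge_point inj_on_edge_point seed that])
    moreover have "r - 1 < n" using assms(2) by linarith
    ultimately show "\<forall>e\<in>?M. c e = 0" by (intro vertex_polys_eq_0_imp_coeffs_eq_0)
  qed
  then show ?thesis by (simp add: card_cartesian_product mult.commute)
qed

section \<open>The upper bound\<close>

lemma le_mult_card_multiples_below:
  assumes "0 < d"
  shows "m \<le> d * card {q. d * q < m}"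
proof -
  have "{q. d * q < m} = {..<(m + d - 1) div d}"
    using assms by (auto simp: less_eq_div_iff_mult_less_eq Suc_le_eq[symmetric] algebra_simps)
  moreover have "m + d - 1 = d * ((m + d - 1) div d) + (m + d - 1) mod d" by simp
  moreover have "(m + d - 1) mod d < d" using assms by simp
  ultimately show ?thesis by (simp only: card_lessThan)
qed

definition residue_seed :: "nat \<Rightarrow> nat \<Rightarrow> nat \<Rightarrow> nat list set" where
  "residue_seed n d r = {x \<in> Knd_V n d. sum_list x \<le> r \<and> sum_list x mod d = r mod d}"

definition raise_amounts :: "nat \<Rightarrow> nat \<Rightarrow> nat set" where
  "raise_amounts d m = (\<lambda>q. m - d * q) ` {q. d * q < m}"

lemma finite_raise_amounts: "finite (raise_amounts d m)"
proof -
  have "raise_amounts d m \<subseteq> {..m}" by (auto simp: raise_amounts_def)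
  then show ?thesis by (rule finite_subset) simp
qed

lemma le_mult_card_raise_amounts:
  assumes "0 < d"
  shows "m \<le> d * card (raise_amounts d m)"
proof -
  have "inj_on (\<lambda>q. m - d * q) {q. d * q < m}"
  proof (rule inj_onI)
    fix q q' assume "q \<in> {q. d * q < m}" "q' \<in> {q. d * q < m}" "m - d * q = m - d * q'"
    then have "d * q = d * q'" by (simp only: mem_Collect_eq)
    then show "q = q'" using assms by simp
  qed
  then show ?thesis
    using le_mult_card_multiples_below[OF assms, of m] by (simp add: raise_amounts_def card_image)
qed

lemma raise_update_in_residue_seed:
  assumes "r < n" "x \<in> Knd_V n d" "i < d" "t \<in> raise_amounts d (r - sum_list x)"
  shows "x[i := x ! i + t] \<in> nbhd (Knd_V n d) (Knd_E d) x \<inter> residue_seed n d r"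
proof -
  obtain q where q: "d * q < r - sum_list x" "t = r - sum_list x - d * q"
    using assms(4) by (auto simp: raise_amounts_def)
  have len: "length x = d" using assms(2) by (simp add: Knd_V_def)
  then have "x ! i \<le> sum_list x" using assms(3) by (simp add: elem_le_sum_list)
  then have "x ! i + t < n" using assms(1) q by linarith
  then have "x[i := x ! i + t] \<in> nbhd (Knd_V n d) (Knd_E d) x"
    using q by (intro update_in_nbhd_Knd assms(2,3)) auto
  moreover have "sum_list (x[i := x ! i + t]) = r - d * q"
    using sum_list_update[of i x "x ! i + t"] assms(3) len q by simp
  moreover have "d * q \<le> r" using q(1) by linarith
  then have "(r - d * q) mod d = r mod d" by (metis le_add_diff_inverse2 mod_mult_self2)
  ultimately show ?thesis by (auto simp: residue_seed_def nbhd_def)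
qed

text \<open>A vertex with coordinate sum \<open>s\<close> has \<open>s\<close> neighbours of smaller coordinate sum, and
  \<open>\<lceil>(r - s) / d\<rceil>\<close> neighbours in the seed in each coordinate direction.\<close>
lemma r_le_card_active_nbhd:
  assumes "0 < d" "r < n" "x \<in> Knd_V n d"
    and lower: "\<And>y. sum_list y < sum_list x \<Longrightarrow> y \<in> Knd_V n d \<Longrightarrow> y \<in> C"
    and seed: "residue_seed n d r \<subseteq> C"
  shows "r \<le> card (nbhd (Knd_V n d) (Knd_E d) x \<inter> C)"
proof -
  define R where "R = raise_amounts d (r - sum_list x)"
  define W where "W i = {..<x ! i} \<union> (+) (x ! i) ` R" for i
  have len: "length x = d" using assms(3) by (simp add: Knd_V_def)
  have "0 \<notin> R" by (auto simp: R_def raise_amounts_def)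
  then have W_not: "x ! i \<notin> W i" for i by (auto simp: W_def)
  have finite_W: "finite (W i)" for i by (simp add: W_def R_def finite_raise_amounts)
  have card_W: "card (W i) = x ! i + card R" for i
    using \<open>0 \<notin> R\<close> unfolding W_def
    by (subst card_Un_disjoint) (auto simp: R_def finite_raise_amounts card_image)
  have active: "x[i := v] \<in> nbhd (Knd_V n d) (Knd_E d) x \<inter> C" if "i < d" "v \<in> W i" for i v
  proof (cases "v < x ! i")
    case True
    then have "v < n" using assms(3) \<open>i < d\<close> by (auto simp: Knd_V_def)
    then have "x[i := v] \<in> nbhd (Knd_V n d) (Knd_E d) x"
      using True by (intro update_in_nbhd_Knd assms(3) \<open>i < d\<close>) auto
    moreover have "sum_list (x[i := v]) < sum_list x"
      using sum_list_update[of i x v] elem_le_sum_list[of i x] len \<open>i < d\<close> True by simp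
    ultimately show ?thesis using lower by (auto simp: nbhd_def)
  next
    case False
    then obtain t where "v = x ! i + t" "t \<in> R" using \<open>v \<in> W i\<close> by (auto simp: W_def)
    then show ?thesis
      using raise_update_in_residue_seed[OF assms(2,3) \<open>i < d\<close>] seed by (auto simp: R_def)
  qed
  have "r \<le> sum_list x + d * card R"
    using le_mult_card_raise_amounts[OF assms(1), of "r - sum_list x"] by (simp add: R_def)
  also have "\<dots> = (\<Sum>i<d. card (W i))"
    using len by (simp add: card_W sum.distrib sum_list_sum_nth atLeast0LessThan)
  also have "\<dots> = card (\<Union>i<d. (\<lambda>v. x[i := v]) ` W i)"
    using len W_not finite_W by (intro card_coordinate_updates[symmetric])
  also have "\<dots> \<le> card (nbhd (Knd_V n d) (Knd_E d) x \<inter> C)"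
    using active by (intro card_mono finite_nbhd_Int finite_Knd_V) blast
  finally show ?thesis .
qed

lemma percolating_residue_seed:
  assumes "0 < d" "r < n"
  shows "percolating (Knd_V n d) (Knd_E d) r (residue_seed n d r)"
proof -
  let ?V = "Knd_V n d" and ?A = "residue_seed n d r"
  have "x \<in> bp_closure ?V (Knd_E d) r ?A" if "x \<in> ?V" for x
    using that
  proof (induction "sum_list x" arbitrary: x rule: less_induct)
    case less
    have "r \<le> card (nbhd ?V (Knd_E d) x \<inter> bp_closure ?V (Knd_E d) r ?A)"
      by (rule r_le_card_active_nbhd[OF assms less.prems less.hyps subset_bp_closure])
    then show ?case by (rule bp_closure_activate[OF finite_Knd_V less.prems])
  qed
  moreover have "bp_closure ?V (Knd_E d) r ?A \<subseteq> ?V"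
    by (rule bp_closure_least) (auto simp: finite_Knd_V residue_seed_def)
  moreover have "?A \<subseteq> ?V" by (auto simp: residue_seed_def)
  ultimately show ?thesis unfolding percolating_iff_bp_closure by blast
qed

lemma eq_if_add_eq_and_mod_eq:
  fixes a b j j' :: nat
  assumes "a mod d = b mod d" "j < d" "j' < d" "a + j = b + j'"
  shows "j = j'"
proof -
  have "i = i'" if "a' mod d = b' mod d" "i' < d" "i \<le> i'" "a' + i = b' + i'" for a' b' i i'
  proof -
    have "a' = b' + (i' - i)" using that(3,4) by linarith
    then have "d dvd i' - i" using that(1) mod_eq_dvd_iff_nat[of b' a' d] by simp
    have "\<not> 0 < i' - i"
    proof
      assume "0 < i' - i"
      with \<open>d dvd i' - i\<close> have "d \<le> i' - i" by (rule dvd_imp_le)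
      then show False using that(2) by linarith
    qed
    then show "i = i'" using that(3) by linarith
  qed
  note key = this
  show ?thesis
  proof (cases "j \<le> j'")
    case True
    show ?thesis by (rule key[OF assms(1) assms(3) True assms(4)])
  next
    case False
    show ?thesis using key[OF assms(1)[symmetric] assms(2) _ assms(4)[symmetric]] False by simp
  qed
qed

lemma card_residue_seed:
  assumes "0 < d"
  shows "d * card (residue_seed n d r) \<le> (r + 2 * d - 1) choose d"
proof -
  let ?A = "residue_seed n d r"
  let ?L = "{l :: nat list. length l = d \<and> sum_list l \<le> r + d - 1}"
  define shift where "shift = (\<lambda>(x :: nat list, j). x[0 := x ! 0 + j])"
  have len: "length x = d" if "x \<in> ?A" for x
    using that by (simp add: residue_seed_def Knd_V_def)
  have sum_shift: "sum_list (shift (x, j)) = sum_list x + j" if "x \<in> ?A" for x j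
    using sum_list_update[of 0 x "x ! 0 + j"] len[OF that] assms by (simp add: shift_def)
  have unshift: "(shift (x, j))[0 := shift (x, j) ! 0 - j] = x" if "x \<in> ?A" for x j
    using len[OF that] assms by (simp add: shift_def)
  have "inj_on shift (?A \<times> {..<d})"
  proof (rule inj_onI, clarify)
    fix x j x' j' assume xj: "x \<in> ?A" "j < d" "x' \<in> ?A" "j' < d" and eq: "shift (x, j) = shift (x', j')"
    have "sum_list x mod d = sum_list x' mod d" using xj by (simp add: residue_seed_def)
    moreover have "sum_list x + j = sum_list x' + j'"
      using sum_shift[OF xj(1), of j] sum_shift[OF xj(3), of j'] eq by simp
    ultimately have "j = j'" using eq_if_add_eq_and_mod_eq xj(2,4) by blast
    moreover have "x = x'"
      using unshift[OF xj(1), of j] unshift[OF xj(3), of j'] eq \<open>j = j'\<close> by metis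
    ultimately show "x = x' \<and> j = j'" by simp
  qed
  moreover have "shift ` (?A \<times> {..<d}) \<subseteq> ?L"
  proof (rule image_subsetI, clarify)
    fix x j assume "x \<in> ?A" "j < d"
    moreover from \<open>x \<in> ?A\<close> have "sum_list x \<le> r" by (simp add: residue_seed_def)
    ultimately show "length (shift (x, j)) = d \<and> sum_list (shift (x, j)) \<le> r + d - 1"
      using len sum_shift by (simp add: shift_def)
  qed
  moreover have "finite ?L"
    using card_lists_sum_le[of d "r + d - 1"] by (intro card_ge_0_finite) simp
  ultimately have "card (?A \<times> {..<d}) \<le> card ?L"
    by (rule card_inj_on_le)
  also have "card ?L = (r + d - 1 + d) choose d" by (rule card_lists_sum_le)
  also have "r + d - 1 + d = r + 2 * d - 1" using assms by simp
  finally show ?thesis by (simp add: card_cartesian_product mult.commute)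
qed

lemma le_upper_bound_if_mult_le_choose:
  fixes k r d :: nat
  assumes "2 \<le> d" "d * k \<le> (r + 2 * d - 1) choose d"
  shows "real k \<le> ((real r + 2 * real d - 1) ^ d - ((real d - 2) / (real d - 1))\<^sup>2 * (real r - 2) ^ d)
    / (2 * fact d)"
proof -
  define X where "X = real r + 2 * real d - 1"
  define Y where "Y = real r - 2"
  define \<delta> where "\<delta> = (real d - 2) / (real d - 1)"
  have "real (d * k) \<le> real ((r + 2 * d - 1) choose d)"
    using assms(2) by (simp only: of_nat_le_iff)
  then have "real (d * k) * fact d \<le> real ((r + 2 * d - 1) choose d) * fact d"
    by (rule mult_right_mono) simp
  also have "\<dots> \<le> real (r + 2 * d - 1) ^ d"
    using binomial_fact_pow[of "r + 2 * d - 1" d] by (metis of_nat_fact of_nat_le_iff of_nat_mult of_nat_power)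
  also have "real (r + 2 * d - 1) = X" using assms(1) by (simp add: X_def of_nat_diff)
  finally have k_bound: "real d * (real k * fact d) \<le> X ^ d" by simp
  have "\<bar>Y\<bar> \<le> X" using assms(1) by (simp add: X_def Y_def)
  have "Y ^ d \<le> \<bar>Y\<bar> ^ d" using abs_ge_self[of "Y ^ d"] by (simp add: power_abs)
  also have "\<dots> \<le> X ^ d" using \<open>\<bar>Y\<bar> \<le> X\<close> by (intro power_mono) simp_all
  finally have "real d * (\<delta>\<^sup>2 * Y ^ d) \<le> real d * (\<delta>\<^sup>2 * X ^ d)"
    by (intro mult_left_mono) simp_all
  moreover have "real d * \<delta>\<^sup>2 \<le> real d - 2"
  proof -
    have "(real d - 2) * (real d - 1)\<^sup>2 - real d * (real d - 2)\<^sup>2 = real d - 2"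
      by algebra
    then have "real d * (real d - 2)\<^sup>2 \<le> (real d - 2) * (real d - 1)\<^sup>2"
      using assms(1) by linarith
    then have "real d * (real d - 2)\<^sup>2 / (real d - 1)\<^sup>2 \<le> real d - 2"
      using assms(1) by (simp add: pos_divide_le_eq)
    then show ?thesis by (simp add: \<delta>_def power_divide)
  qed
  moreover have "0 \<le> X ^ d" using assms(1) by (simp add: X_def)
  ultimately have "real d * (\<delta>\<^sup>2 * Y ^ d) \<le> (real d - 2) * X ^ d"
    by (simp add: mult.assoc[symmetric] order_trans[OF _ mult_right_mono])
  with k_bound have "real d * (2 * (real k * fact d)) \<le> real d * (X ^ d - \<delta>\<^sup>2 * Y ^ d)"
    by (simp add: algebra_simps)
  then have "2 * (real k * fact d) \<le> X ^ d - \<delta>\<^sup>2 * Y ^ d"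
    using assms(1) by simp
  then show ?thesis by (simp add: X_def Y_def \<delta>_def field_simps)
qed

theorem theorem4p4:
  fixes n r d :: nat
  assumes "n > 0" "r > 0" "d \<ge> 2" "n \<ge> r + 1"
  defines "\<delta> \<equiv> (real d - 2) / (real d - 1)"
  shows "(1 / real r) * real ((d + r) choose (d + 1)) \<le> real (m_perc (Knd_V n d) (Knd_E d) r)
       \<and> real (m_perc (Knd_V n d) (Knd_E d) r)
           \<le> ((real r + 2 * real d - 1) ^ d - \<delta>^2 * (real r - 2) ^ d) / (2 * fact d)"
proof
  let ?m = "m_perc (Knd_V n d) (Knd_E d) r"
  obtain A where A: "percolating (Knd_V n d) (Knd_E d) r A" "card A = ?m"
    using m_perc_attained by blast
  have "(d + r) choose (d + 1) = card (monomial_exps d (r - 1))"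
    using assms(2) by (simp add: card_monomial_exps add.commute)
  also have "\<dots> \<le> r * ?m"
    using card_monomial_exps_le_percolating[OF assms(2) _ A(1)] assms(4) A(2) by simp
  finally show "(1 / real r) * real ((d + r) choose (d + 1)) \<le> real ?m"
    using assms(2) by (simp add: field_simps flip: of_nat_mult)
next
  let ?A = "residue_seed n d r"
  have "m_perc (Knd_V n d) (Knd_E d) r \<le> card ?A"
    using assms(3,4) by (intro m_perc_le percolating_residue_seed) simp_all
  moreover have "d * card ?A \<le> (r + 2 * d - 1) choose d"
    using assms(3) by (intro card_residue_seed) simp
  ultimately have "d * m_perc (Knd_V n d) (Knd_E d) r \<le> (r + 2 * d - 1) choose d"
    by (meson le_trans mult_le_mono2)
  then show "real (m_perc (Knd_V n d) (Knd_E d) r)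
      \<le> ((real r + 2 * real d - 1) ^ d - \<delta>^2 * (real r - 2) ^ d) / (2 * fact d)"
    unfolding \<delta>_def using assms(3) by (rule le_upper_bound_if_mult_le_choose[rotated])
qed

end
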